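(* Let $W$ be a symmetric binary-input discrete memoryless channel with finite output alphabet $\mathcal{Y}$, let $N=2^n$, let $0\le i\le N-1$, and let $A=A(N,i)$ be the binary matrix formed by rows $i+1,\dots,N$ of $G_N=F^{\otimes n}$, where $F=\begin{pmatrix}1&0\\1&1\end{pmatrix}$ over $\mathbb{F}_2$. Let $P$ be an $N\times N$ permutation matrix and suppose there exists an invertible $(N-i)\times(N-i)$ matrix $H$ over $\mathbb{F}_2$ with $AP=HA$. Then for every $\mathbf{y}\in\mathcal{Y}^N$, the vectors $\mathbf{y}$ and $T_P(\mathbf{y})$ are probability equivalent on $A$, i.e. $W_A(T_P(\mathbf{y}))=W_A(\mathbf{y})$.
   Context: Symmetric channel: $W(y|x)$, $x\in\{0,1\}$, $y\in\mathcal{Y}$, and there is an involution $y\mapsto 1\cdot y$ of $\mathcal{Y}$ with $W(1\cdot y|0)=W(y|1)$ and $W(1\cdot y|1)=W(y|0)$; set $0\cdot y=y$. For $\mathbf{u}\in\mathbb{F}_2^N$ and $\mathbf{y}\in\mathcal{Y}^N$, $\mathbf{u}\cdot\mathbf{y}=(u_1\cdot y_1,\dots,u_N\cdot y_N)$. $W^N(\mathbf{y}|\mathbf{x})=\prod_{j=1}^N W(y_j|x_j)$. For a binary matrix $A$ with $N$ columns, with row space $\mathrm{row}(A)\subseteq\mathbb{F}_2^N$, define $W_A(\mathbf{y})=\frac{1}{2^{N-1}}\sum_{\mathbf{u}\in\mathrm{row}(A)}W^N(\mathbf{u}\cdot\mathbf{y}|\mathbf{0})$; two vectors $\mathbf{y},\mathbf{v}$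 are probability equivalent on $A$ if $W_A(\mathbf{y})=W_A(\mathbf{v})$. $T_P(\mathbf{y})$ denotes the vector obtained by permuting the coordinates of $\mathbf{y}$ according to $P$ (i.e. $\mathbf{y}P$). *)

theory Defs
  imports "HOL-Library.Z2" "Jordan_Normal_Form.Matrix"
begin

definition F_kernel :: "nat \<Rightarrow> nat \<Rightarrow> bit" where
  "F_kernel r c = (if r = 0 \<and> c = 1 then 0 else 1)"

text \<open>Entries of G_N = F^{\<otimes> n}, N = 2^n, via G_{n+1} = F \<otimes> G_n (Kronecker product), 0-based.\<close>
fun G_entry :: "nat \<Rightarrow> nat \<Rightarrow> nat \<Rightarrow> bit" where
  "G_entry 0 r c = 1"
| "G_entry (Suc n) r c = F_kernel (r div 2^n) (c div 2^n) * G_entry n (r mod 2^n) (c mod 2^n)"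

definition G_mat :: "nat \<Rightarrow> bit mat" where
  "G_mat n = mat (2^n) (2^n) (\<lambda>(r, c). G_entry n r c)"

text \<open>A(N,i): rows i+1,...,N (1-based) of G_N, i.e. rows i..N-1 (0-based).\<close>
definition A_mat :: "nat \<Rightarrow> nat \<Rightarrow> bit mat" where
  "A_mat n i = mat (2^n - i) (2^n) (\<lambda>(r, c). G_mat n $$ (r + i, c))"

definition row_space :: "bit mat \<Rightarrow> bit vec set" where
  "row_space A = {transpose_mat A *\<^sub>v v | v. v \<in> carrier_vec (dim_row A)}"

definition permutation_mat :: "nat \<Rightarrow> bit mat \<Rightarrow> bool" where
  "permutation_mat N P \<longleftrightarrow> (\<exists>\<sigma>. \<sigma> permutes {..<N} \<and>
      P = mat N N (\<lambda>(r, c). if \<sigma> r = c then 1 else 0))"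

text \<open>T_P(y) = yP: coordinate c of yP is y_r for the unique r with P_{r,c} = 1.\<close>
definition T_P :: "nat \<Rightarrow> bit mat \<Rightarrow> (nat \<Rightarrow> 'y) \<Rightarrow> (nat \<Rightarrow> 'y)" where
  "T_P N P y = (\<lambda>c. y (THE r. r < N \<and> P $$ (r, c) = 1))"

text \<open>Symmetric channel: W x y = W(y|x), flip is the involution y \<mapsto> 1\<cdot>y.\<close>
definition symmetric_bdmc :: "(bit \<Rightarrow> 'y::finite \<Rightarrow> real) \<Rightarrow> ('y \<Rightarrow> 'y) \<Rightarrow> bool" where
  "symmetric_bdmc W flip \<longleftrightarrow>
     (\<forall>x y. W x y \<ge> 0) \<and> (\<forall>x. (\<Sum>y\<in>UNIV. W x y) = 1) \<and>
     (\<forall>y. flip (flip y) = y) \<and>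
     (\<forall>y. W 0 (flip y) = W 1 y) \<and> (\<forall>y. W 1 (flip y) = W 0 y)"

definition act :: "('y \<Rightarrow> 'y) \<Rightarrow> bit \<Rightarrow> 'y \<Rightarrow> 'y" where
  "act flip b y = (if b = 1 then flip y else y)"

definition W_A :: "(bit \<Rightarrow> 'y \<Rightarrow> real) \<Rightarrow> ('y \<Rightarrow> 'y) \<Rightarrow> nat \<Rightarrow> bit mat \<Rightarrow> (nat \<Rightarrow> 'y) \<Rightarrow> real" where
  "W_A W flip N A y = (1 / 2 ^ (N - 1)) *
     (\<Sum>u\<in>row_space A. \<Prod>j<N. W 0 (act flip (u $ j) (y j)))"

end

theory Submission
  imports Defs
begin

text \<open>A column permutation \<open>P\<close> with \<open>A P = H A\<close> maps the row space of \<open>A\<close> into itself, hence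
  (being injective on a finite set) onto itself. Reindexing the sum in \<open>W_A\<close> by this bijection and
  then reindexing each product over coordinates by the permutation itself turns \<open>W_A(T_P y)\<close> into
  \<open>W_A(y)\<close>.\<close>

lemma finite_carrier_vec:
  assumes "finite (UNIV :: 'a set)"
  shows "finite (carrier_vec N :: 'a vec set)"
proof (rule finite_surj[OF finite_lists_length_eq[OF assms, of N]])
  show "carrier_vec N \<subseteq> vec_of_list ` {xs. set xs \<subseteq> UNIV \<and> length xs = N}"
    by (auto intro!: image_eqI[of _ vec_of_list "list_of_vec _"] simp: vec_list)
qed

lemma UNIV_bit: "(UNIV :: bit set) = {0, 1}"
  by (auto intro: bit.exhaust)

lemma row_space_carrier: "row_space A \<subseteq> carrier_vec (dim_col A)"
proof
  fix u assume "u \<in> row_space A"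
  then obtain v where "u = transpose_mat A *\<^sub>v v"
    by (auto simp: row_space_def)
  then show "u \<in> carrier_vec (dim_col A)"
    by (simp add: carrier_vecI)
qed

lemma finite_row_space: "finite (row_space A)"
proof (rule finite_subset[OF row_space_carrier finite_carrier_vec])
  show "finite (UNIV :: bit set)"
    by (simp add: UNIV_bit)
qed

definition perm_mat :: "nat \<Rightarrow> (nat \<Rightarrow> nat) \<Rightarrow> 'a::{zero,one} mat" where
  "perm_mat N \<sigma> = mat N N (\<lambda>(r, c). if \<sigma> r = c then 1 else 0)"

lemma permutation_mat_iff: "permutation_mat N P \<longleftrightarrow> (\<exists>\<sigma>. \<sigma> permutes {..<N} \<and> P = perm_mat N \<sigma>)"
  by (simp add: permutation_mat_def perm_mat_def)

lemma perm_mat_carrier [simp]: "perm_mat N \<sigma> \<in> carrier_mat N N"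
  by (simp add: perm_mat_def)

lemma transpose_perm_mat_mult_vec:
  fixes u :: "'a::comm_semiring_1 vec"
  assumes \<sigma>: "\<sigma> permutes {..<N}" and u: "u \<in> carrier_vec N"
  shows "transpose_mat (perm_mat N \<sigma>) *\<^sub>v u = vec N (\<lambda>k. u $ inv_into UNIV \<sigma> k)"
proof (rule eq_vecI)
  fix k assume "k < dim_vec (vec N (\<lambda>k. u $ inv_into UNIV \<sigma> k))"
  then have k: "k < N" by simp
  have inv_k: "inv_into UNIV \<sigma> k < N"
    using permutes_in_image[OF permutes_inv[OF \<sigma>]] k by simp
  have \<sigma>_eq: "\<sigma> r = k \<longleftrightarrow> r = inv_into UNIV \<sigma> k" for r
    using permutes_inverses[OF \<sigma>] by metis
  have "(transpose_mat (perm_mat N \<sigma>) *\<^sub>v u) $ k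
      = (\<Sum>r\<in>{0..<N}. (if \<sigma> r = k then 1 else 0) * u $ r)"
    using u k by (simp add: perm_mat_def scalar_prod_def)
  also have "\<dots> = (\<Sum>r\<in>{0..<N}. if r = inv_into UNIV \<sigma> k then u $ r else 0)"
    using \<sigma>_eq by (intro sum.cong) auto
  finally show "(transpose_mat (perm_mat N \<sigma>) *\<^sub>v u) $ k = vec N (\<lambda>k. u $ inv_into UNIV \<sigma> k) $ k"
    using inv_k k by simp
qed (simp add: perm_mat_def)

lemma T_P_perm_mat:
  assumes \<sigma>: "\<sigma> permutes {..<N}" and c: "c < N"
  shows "T_P N (perm_mat N \<sigma>) y c = y (inv_into UNIV \<sigma> c)"
proof -
  have "(THE r. r < N \<and> perm_mat N \<sigma> $$ (r, c) = (1 :: bit)) = inv_into UNIV \<sigma> c"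
  proof (rule the_equality)
    show "inv_into UNIV \<sigma> c < N \<and> perm_mat N \<sigma> $$ (inv_into UNIV \<sigma> c, c) = (1 :: bit)"
      using permutes_in_image[OF permutes_inv[OF \<sigma>]] permutes_inverses[OF \<sigma>] c
      by (simp add: perm_mat_def)
  next
    fix r assume "r < N \<and> perm_mat N \<sigma> $$ (r, c) = (1 :: bit)"
    then have "\<sigma> r = c"
      using c by (auto simp: perm_mat_def split: if_splits)
    then show "r = inv_into UNIV \<sigma> c"
      using permutes_inverses[OF \<sigma>] by metis
  qed
  then show ?thesis
    by (simp add: T_P_def)
qed

lemma row_space_closed_mult_transpose:
  assumes A: "A \<in> carrier_mat m N" and P: "P \<in> carrier_mat N N" and H: "H \<in> carrier_mat m m"
    and AP: "A * P = H * A" and u: "u \<in> row_space A"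
  shows "transpose_mat P *\<^sub>v u \<in> row_space A"
proof -
  obtain v where v: "v \<in> carrier_vec m" and u_def: "u = transpose_mat A *\<^sub>v v"
    using u A by (auto simp: row_space_def)
  have "transpose_mat P *\<^sub>v u = transpose_mat (A * P) *\<^sub>v v"
    using A P v by (simp add: u_def transpose_mult assoc_mult_mat_vec[of _ N N _ m])
  also have "\<dots> = transpose_mat A *\<^sub>v (transpose_mat H *\<^sub>v v)"
    using A H v by (simp add: AP transpose_mult assoc_mult_mat_vec[of _ N m _ m])
  finally show ?thesis
    using A H v by (auto simp: row_space_def)
qed

text \<open>Only the coordinates below \<open>N\<close> of the received word enter \<open>W_A\<close>, so \<open>y'\<close> need only agree
  with \<open>y \<circ> inv_into UNIV \<sigma>\<close> there.\<close>
lemma W_A_permute_invariant: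
  assumes \<sigma>: "\<sigma> permutes {..<N}" and A: "dim_col A = N"
    and closed: "\<And>u. u \<in> row_space A \<Longrightarrow> vec N (\<lambda>k. u $ inv_into UNIV \<sigma> k) \<in> row_space A"
    and y': "\<And>c. c < N \<Longrightarrow> y' c = y (inv_into UNIV \<sigma> c)"
  shows "W_A W flip N A y' = W_A W flip N A y"
proof -
  define RS where "RS = row_space A"
  define g :: "bit vec \<Rightarrow> bit vec" where "g u = vec N (\<lambda>k. u $ inv_into UNIV \<sigma> k)" for u
  define F where "F u j = W 0 (act flip (u $ j) (y j))" for u j
  have RS_carrier: "RS \<subseteq> carrier_vec N"
    using row_space_carrier[of A] A by (simp add: RS_def)
  have inj: "inj_on g RS"
  proof (rule inj_onI)
    fix u v assume "u \<in> RS" "v \<in> RS" "g u = g v"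
    then have "u $ inv_into UNIV \<sigma> (\<sigma> j) = v $ inv_into UNIV \<sigma> (\<sigma> j)" if "j < N" for j
      using that permutes_in_image[OF \<sigma>] by (metis g_def index_vec lessThan_iff)
    moreover have "u \<in> carrier_vec N" "v \<in> carrier_vec N"
      using \<open>u \<in> RS\<close> \<open>v \<in> RS\<close> RS_carrier by auto
    ultimately show "u = v"
      using permutes_inverses(2)[OF \<sigma>] by (intro eq_vecI) auto
  qed
  have bij: "g ` RS = RS"
    using endo_inj_surj[OF _ _ inj] finite_row_space closed by (auto simp: RS_def g_def)
  have "(\<Sum>u\<in>RS. \<Prod>j<N. W 0 (act flip (u $ j) (y' j)))
      = (\<Sum>u\<in>RS. \<Prod>j<N. W 0 (act flip (u $ j) (y (inv_into UNIV \<sigma> j))))"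
    by (simp add: y')
  also have "\<dots> = (\<Sum>u\<in>RS. \<Prod>j<N. W 0 (act flip (g u $ j) (y (inv_into UNIV \<sigma> j))))"
    using sum.reindex[OF inj, of "\<lambda>u. \<Prod>j<N. W 0 (act flip (u $ j) (y (inv_into UNIV \<sigma> j)))"]
    by (simp add: bij)
  also have "\<dots> = (\<Sum>u\<in>RS. \<Prod>j<N. F u (inv_into UNIV \<sigma> j))"
    by (simp add: F_def g_def)
  also have "\<dots> = (\<Sum>u\<in>RS. \<Prod>j<N. F u j)"
  proof (intro sum.cong refl)
    fix u
    show "(\<Prod>j<N. F u (inv_into UNIV \<sigma> j)) = (\<Prod>j<N. F u j)"
      using prod.permute[OF permutes_inv[OF \<sigma>], of "F u"] by (simp add: comp_def)
  qed
  finally show ?thesis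
    by (simp add: W_A_def RS_def F_def)
qed

theorem theorem1:
  fixes W :: "bit \<Rightarrow> 'y::finite \<Rightarrow> real" and flip :: "'y \<Rightarrow> 'y"
    and n i :: nat and P H :: "bit mat" and y :: "nat \<Rightarrow> 'y"
  assumes "symmetric_bdmc W flip"
    and "i \<le> 2^n - 1"
    and "permutation_mat (2^n) P"
    and "H \<in> carrier_mat (2^n - i) (2^n - i)" and "invertible_mat H"
    and "A_mat n i * P = H * A_mat n i"
  shows "W_A W flip (2^n) (A_mat n i) (T_P (2^n) P y) = W_A W flip (2^n) (A_mat n i) y"
proof -
  obtain \<sigma> where \<sigma>: "\<sigma> permutes {..<2^n}" and P: "P = perm_mat (2^n) \<sigma>"
    using assms(3) by (auto simp: permutation_mat_iff)
  have A: "A_mat n i \<in> carrier_mat (2^n - i) (2^n)"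
    by (simp add: A_mat_def)
  have closed: "vec (2^n) (\<lambda>k. u $ inv_into UNIV \<sigma> k) \<in> row_space (A_mat n i)"
    if "u \<in> row_space (A_mat n i)" for u
  proof -
    have "u \<in> carrier_vec (2^n)"
      using that row_space_carrier[of "A_mat n i"] A by auto
    then show ?thesis
      using row_space_closed_mult_transpose[OF A _ assms(4) assms(6) that]
      by (simp add: P transpose_perm_mat_mult_vec[OF \<sigma>])
  qed
  show ?thesis
    unfolding P by (rule W_A_permute_invariant[OF \<sigma> _ closed]) (use A T_P_perm_mat[OF \<sigma>] in auto)
qed

end
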